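(* Let $V$ be an amenable collection of vectors subordinate to a $\mathbb{Q}$-nef partition $E_1,\dots,E_{k+1}$ of a complete fan $\Sigma$ with functions $\varphi_1,\dots,\varphi_{k+1}$. Let $C$ be a minimal cone of $\Sigma$ such that $C\cap M_V$ is $1$-dimensional. Then there is a point $\rho\in C\cap M_V\cap M$ with $\varphi_{k+1}(\rho)=1$.
   Context: $M$ lattice of rank $n$, $N=\mathrm{Hom}(M,\mathbb{Z})$; $\Sigma$ complete fan of strictly convex rational cones in $M_\mathbb{R}$, $\Sigma[1]$ primitive ray generators. $\mathbb{Q}$-nef partition: ordered partition $\Sigma[1]=E_1\sqcup\dots\sqcup E_{k+1}$ with convex functions $\varphi_i(v)=\max_C\langle u_{i,C},v\rangle$ ($u_{i,C}\in N\otimes\mathbb{Q}$, $C$ maximal cones), linear on each cone of $\Sigma$, with $\varphi_i(\rho)=\delta_{ij}$ for $\rho\in E_j$. Amenable collection: $V=\{v_1,\dots,v_k\}\subset N$ with $\langle v_i,\rho\rangle=-1$ on $E_i$, $\ge0$ on $E_j$ for $i<j\le k+1$, $=0$ on $E_j$ for $j<i$. $M_V=\{u\in M_\mathbb{R}:\langle v_i,u\rangle=0\ \forall i\}$. *)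

theory Defs
  imports "HOL-Analysis.Analysis"
begin

text \<open>The lattice M is the set of integer points of real^'n (rank n = CARD('n));
  N = Hom(M,Z) is identified with the integer points of real^'n via the inner product.\<close>

definition lattice_pt :: "real^'n \<Rightarrow> bool" where
  "lattice_pt x \<longleftrightarrow> (\<forall>i. x $ i \<in> \<int>)"

definition rational_pt :: "real^'n \<Rightarrow> bool" where
  "rational_pt x \<longleftrightarrow> (\<forall>i. x $ i \<in> \<rat>)"

definition rat_poly_cone :: "(real^'n) set \<Rightarrow> bool" where
  "rat_poly_cone \<sigma> \<longleftrightarrow> (\<exists>S. finite S \<and> (\<forall>x\<in>S. lattice_pt x) \<and>
      \<sigma> = {\<Sum>x\<in>S. c x *\<^sub>R x | c. \<forall>x\<in>S. c x \<ge> 0})"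

definition strictly_convex_cone :: "(real^'n) set \<Rightarrow> bool" where
  "strictly_convex_cone \<sigma> \<longleftrightarrow> \<sigma> \<inter> uminus ` \<sigma> = {0}"

definition is_fan :: "(real^'n) set set \<Rightarrow> bool" where
  "is_fan \<Sigma> \<longleftrightarrow> finite \<Sigma> \<and>
     (\<forall>\<sigma>\<in>\<Sigma>. rat_poly_cone \<sigma> \<and> strictly_convex_cone \<sigma>) \<and>
     (\<forall>\<sigma>\<in>\<Sigma>. \<forall>F. F face_of \<sigma> \<and> F \<noteq> {} \<longrightarrow> F \<in> \<Sigma>) \<and>
     (\<forall>\<sigma>\<in>\<Sigma>. \<forall>\<tau>\<in>\<Sigma>. (\<sigma> \<inter> \<tau>) face_of \<sigma> \<and> (\<sigma> \<inter> \<tau>) face_of \<tau>)"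

definition complete_fan :: "(real^'n) set set \<Rightarrow> bool" where
  "complete_fan \<Sigma> \<longleftrightarrow> is_fan \<Sigma> \<and> \<Union>\<Sigma> = UNIV"

definition primitive_generator :: "real^'n \<Rightarrow> (real^'n) set \<Rightarrow> bool" where
  "primitive_generator \<rho> \<sigma> \<longleftrightarrow> \<rho> \<in> \<sigma> \<and> lattice_pt \<rho> \<and> \<rho> \<noteq> 0 \<and>
     (\<forall>x\<in>\<sigma>. lattice_pt x \<longrightarrow> (\<exists>m::nat. x = real m *\<^sub>R \<rho>))"

definition rays :: "(real^'n) set set \<Rightarrow> (real^'n) set" where
  "rays \<Sigma> = {\<rho>. \<exists>\<sigma>\<in>\<Sigma>. aff_dim \<sigma> = 1 \<and> primitive_generator \<rho> \<sigma>}"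

definition maximal_cones :: "(real^'n) set set \<Rightarrow> (real^'n) set set" where
  "maximal_cones \<Sigma> = {\<sigma>\<in>\<Sigma>. \<forall>\<tau>\<in>\<Sigma>. \<sigma> \<subseteq> \<tau> \<longrightarrow> \<tau> = \<sigma>}"

definition Qnef_partition ::
    "(real^'n) set set \<Rightarrow> nat \<Rightarrow> (nat \<Rightarrow> (real^'n) set) \<Rightarrow> (nat \<Rightarrow> real^'n \<Rightarrow> real) \<Rightarrow> bool" where
  "Qnef_partition \<Sigma> k E \<phi> \<longleftrightarrow>
     (\<Union>j\<in>{1..k+1}. E j) = rays \<Sigma> \<and>
     (\<forall>i\<in>{1..k+1}. \<forall>j\<in>{1..k+1}. i \<noteq> j \<longrightarrow> E i \<inter> E j = {}) \<and>
     (\<forall>i\<in>{1..k+1}. \<exists>u :: (real^'n) set \<Rightarrow> real^'n.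
        (\<forall>\<sigma>\<in>maximal_cones \<Sigma>. rational_pt (u \<sigma>)) \<and>
        (\<forall>v. \<phi> i v = Max ((\<lambda>\<sigma>. u \<sigma> \<bullet> v) ` maximal_cones \<Sigma>)) \<and>
        (\<forall>\<sigma>\<in>maximal_cones \<Sigma>. \<forall>v\<in>\<sigma>. \<phi> i v = u \<sigma> \<bullet> v)) \<and>
     (\<forall>i\<in>{1..k+1}. \<forall>j\<in>{1..k+1}. \<forall>\<rho>\<in>E j. \<phi> i \<rho> = (if i = j then 1 else 0))"

definition amenable ::
    "nat \<Rightarrow> (nat \<Rightarrow> (real^'n) set) \<Rightarrow> (nat \<Rightarrow> real^'n) \<Rightarrow> bool" where
  "amenable k E V \<longleftrightarrow> (\<forall>i\<in>{1..k}.
      lattice_pt (V i) \<and>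
      (\<forall>\<rho>\<in>E i. V i \<bullet> \<rho> = -1) \<and>
      (\<forall>j. i < j \<and> j \<le> k + 1 \<longrightarrow> (\<forall>\<rho>\<in>E j. V i \<bullet> \<rho> \<ge> 0)) \<and>
      (\<forall>j. 1 \<le> j \<and> j < i \<longrightarrow> (\<forall>\<rho>\<in>E j. V i \<bullet> \<rho> = 0)))"

definition M_V :: "nat \<Rightarrow> (nat \<Rightarrow> real^'n) \<Rightarrow> (real^'n) set" where
  "M_V k V = {u. \<forall>i\<in>{1..k}. V i \<bullet> u = 0}"

end

theory Submission
  imports Defs
begin

text \<open>Since C \<inter> M_V is one-dimensional it contains a nonzero point \<rho>. The cone C is pointed and
  rational, so it is generated by its extreme rays; these are faces of C, hence rays of the fan, and
  \<rho> becomes a positive combination of primitive ray generators lying in C. Each generator lies in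
  some E_j, its colour, and on C the function \<phi>_{k+1} is linear, equal to 1 on E_{k+1} and to 0 on the other
  rays. Amenability makes the pairings with v_1, ..., v_k triangular with respect to these colours:
  this forces a generator of colour k+1 to occur in the combination, and starting from it the
  pairings with v_k, ..., v_1 are cleared one at a time by adding nonnegative integer multiples of
  generators of the corresponding colour, which ends in a lattice point of C \<inter> M_V on which
  \<phi>_{k+1} is 1.\<close>

lemma lattice_pt_add: "lattice_pt x \<Longrightarrow> lattice_pt y \<Longrightarrow> lattice_pt (x + y)"
  by (simp add: lattice_pt_def)

lemma lattice_pt_diff: "lattice_pt x \<Longrightarrow> lattice_pt y \<Longrightarrow> lattice_pt (x - y)"
  by (simp add: lattice_pt_def)

lemma lattice_pt_scaleR: "c \<in> \<int> \<Longrightarrow> lattice_pt x \<Longrightarrow> lattice_pt (c *\<^sub>R x)"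
  by (simp add: lattice_pt_def)

lemma lattice_pt_inner_Ints: "lattice_pt x \<Longrightarrow> lattice_pt y \<Longrightarrow> x \<bullet> y \<in> \<int>"
  unfolding inner_vec_def lattice_pt_def by (intro Ints_sum) simp

section \<open>Finitely generated convex cones\<close>

lemma convex_cone_sum:
  assumes "convex_cone K" and "\<And>i. i \<in> I \<Longrightarrow> f i \<in> K"
  shows "sum f I \<in> K"
  using assms(2)
  by (induction I rule: infinite_finite_induct)
     (auto simp: convex_cone_contains_0 convex_cone_add assms(1))

lemma convex_cone_hull_finite:
  fixes S :: "'a::real_vector set"
  assumes "finite S"
  shows "convex_cone hull S = {\<Sum>x\<in>S. c x *\<^sub>R x | c. \<forall>x\<in>S. 0 \<le> c x}"
    (is "_ = ?G")
proof
  show "convex_cone hull S \<subseteq> ?G"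
  proof (rule hull_minimal)
    show "S \<subseteq> ?G"
    proof
      fix y assume "y \<in> S"
      have "(\<Sum>x\<in>S. (if x = y then 1 else 0) *\<^sub>R x) = (\<Sum>x\<in>S. if x = y then x else 0)"
        by (rule sum.cong) auto
      also have "\<dots> = y"
        using assms \<open>y \<in> S\<close> by simp
      finally show "y \<in> ?G"
        by (intro CollectI exI[of _ "\<lambda>x. if x = y then 1 else 0"]) auto
    qed
    show "convex_cone ?G"
      unfolding convex_cone_iff
    proof (intro conjI ballI allI impI)
      show "0 \<in> ?G" by (force intro!: exI[of _ "\<lambda>_. 0"])
    next
      fix x y assume "x \<in> ?G" "y \<in> ?G"
      then obtain c d where "x = (\<Sum>v\<in>S. c v *\<^sub>R v)" "\<forall>v\<in>S. 0 \<le> c v"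
        "y = (\<Sum>v\<in>S. d v *\<^sub>R v)" "\<forall>v\<in>S. 0 \<le> d v" by blast
      then show "x + y \<in> ?G"
        by (auto simp: sum.distrib scaleR_add_left intro!: exI[of _ "\<lambda>v. c v + d v"])
    next
      fix x and t :: real assume "x \<in> ?G" "0 \<le> t"
      then obtain c where "x = (\<Sum>v\<in>S. c v *\<^sub>R v)" "\<forall>v\<in>S. 0 \<le> c v" by blast
      then show "t *\<^sub>R x \<in> ?G"
        using \<open>0 \<le> t\<close> by (auto simp: scaleR_sum_right intro!: exI[of _ "\<lambda>v. t * c v"])
    qed
  qed
  show "?G \<subseteq> convex_cone hull S"
  proof
    fix x assume "x \<in> ?G"
    then obtain c where x: "x = (\<Sum>v\<in>S. c v *\<^sub>R v)" and c: "\<forall>v\<in>S. 0 \<le> c v" by blast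
    have "c v *\<^sub>R v \<in> convex_cone hull S" if "v \<in> S" for v
      using that c by (simp add: convex_cone_hull_mul hull_inc)
    then show "x \<in> convex_cone hull S"
      unfolding x by (rule convex_cone_sum[OF convex_cone_convex_cone_hull])
  qed
qed

lemma convex_cone_hull_finite_positive:
  fixes S :: "'a::real_vector set"
  assumes "finite S" and "x \<in> convex_cone hull S"
  obtains T a where "T \<subseteq> S" "\<forall>v\<in>T. 0 < a v" "x = (\<Sum>v\<in>T. a v *\<^sub>R v)"
proof -
  obtain c where c: "x = (\<Sum>v\<in>S. c v *\<^sub>R v)" "\<forall>v\<in>S. 0 \<le> c v"
    using assms by (auto simp: convex_cone_hull_finite)
  have "x = (\<Sum>v\<in>{v\<in>S. 0 < c v}. c v *\<^sub>R v)"
    unfolding c(1) using assms(1) c(2) by (intro sum.mono_neutral_right) force+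
  then show thesis
    using that[of "{v\<in>S. 0 < c v}"] c(2) by auto
qed

lemma rat_poly_cone_iff:
  fixes \<sigma> :: "(real^'n) set"
  shows "rat_poly_cone \<sigma> \<longleftrightarrow> (\<exists>S. finite S \<and> (\<forall>x\<in>S. lattice_pt x) \<and> \<sigma> = convex_cone hull S)"
  unfolding rat_poly_cone_def
proof (intro iffI; elim exE conjE)
  fix S :: "(real^'n) set"
  assume "finite S" "\<forall>x\<in>S. lattice_pt x"
  then show "\<sigma> = {\<Sum>x\<in>S. c x *\<^sub>R x | c. \<forall>x\<in>S. 0 \<le> c x} \<Longrightarrow>
      \<exists>S. finite S \<and> (\<forall>x\<in>S. lattice_pt x) \<and> \<sigma> = convex_cone hull S"
    and "\<sigma> = convex_cone hull S \<Longrightarrow>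
      \<exists>S. finite S \<and> (\<forall>x\<in>S. lattice_pt x) \<and> \<sigma> = {\<Sum>x\<in>S. c x *\<^sub>R x | c. \<forall>x\<in>S. 0 \<le> c x}"
    by (auto intro!: exI[of _ S] simp: convex_cone_hull_finite)
qed

lemma convex_cone_hull_Diff_0: "convex_cone hull (S - {0}) = convex_cone hull S"
proof
  show "convex_cone hull (S - {0}) \<subseteq> convex_cone hull S"
    by (rule hull_mono) blast
  show "convex_cone hull S \<subseteq> convex_cone hull (S - {0})"
    by (rule hull_minimal)
       (auto intro: hull_inc convex_cone_hull_contains_0 convex_cone_convex_cone_hull)
qed

section \<open>Pointed cones are generated by their extreme rays\<close>

lemma zero_notin_convex_hull_pointed:
  fixes S :: "'a::real_vector set"
  assumes "finite S" and pointed: "convex_cone hull S \<inter> uminus ` (convex_cone hull S) = {0}"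
  shows "0 \<notin> convex hull (S - {0})"
proof
  define T where "T = S - {0}"
  have "finite T"
    using assms(1) by (simp add: T_def)
  assume "0 \<in> convex hull (S - {0})"
  then obtain u where u: "\<forall>x\<in>T. 0 \<le> u x" "sum u T = 1" "(\<Sum>x\<in>T. u x *\<^sub>R x) = 0"
    using convex_hull_finite[OF \<open>finite T\<close>] by (auto simp: T_def)
  then obtain y where y: "y \<in> T" "0 < u y"
    by (metis less_eq_real_def sum.neutral zero_neq_one)
  have in_cone: "x \<in> T \<Longrightarrow> u x *\<^sub>R x \<in> convex_cone hull S" for x
    using u(1) by (simp add: T_def convex_cone_hull_mul hull_inc)
  have "- (u y *\<^sub>R y) = (\<Sum>x\<in>T - {y}. u x *\<^sub>R x)"
    using u(3) y(1) \<open>finite T\<close> by (simp add: sum.remove add_eq_0_iff)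
  also have "\<dots> \<in> convex_cone hull S"
    using in_cone by (blast intro: convex_cone_sum convex_cone_convex_cone_hull)
  finally have "u y *\<^sub>R y \<in> uminus ` (convex_cone hull S)"
    by (metis image_eqI minus_minus)
  then have "u y *\<^sub>R y = 0"
    using pointed in_cone[OF y(1)] by blast
  then show False
    using y T_def by simp
qed

lemma pointed_convex_cone_hull_positive_functional:
  fixes S :: "'a::euclidean_space set"
  assumes "finite S" and "convex_cone hull S \<inter> uminus ` (convex_cone hull S) = {0}"
  obtains h where "\<And>x. x \<in> convex_cone hull S \<Longrightarrow> x \<noteq> 0 \<Longrightarrow> 0 < h \<bullet> x"
proof (cases "S - {0} = {}")
  case True
  then have "convex_cone hull S = {0}"
    by (metis convex_cone_hull_Diff_0 convex_cone_hull_empty)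
  then show thesis
    using that by blast
next
  case False
  have "closed (convex hull (S - {0}))"
    using \<open>finite S\<close> by (simp add: compact_imp_closed finite_imp_compact_convex_hull)
  then obtain h b where "0 < b" and hb: "\<forall>y\<in>convex hull (S - {0}). b < h \<bullet> y"
    using separating_hyperplane_closed_0[OF convex_convex_hull _ zero_notin_convex_hull_pointed[OF assms]]
    by blast
  show thesis
  proof (rule that)
    fix x assume "x \<in> convex_cone hull S" "x \<noteq> 0"
    then have "x \<in> convex_cone hull (S - {0})"
      by (simp only: convex_cone_hull_Diff_0)
    then have "x \<in> conic hull (convex hull (S - {0}))"
      by (simp only: convex_cone_hull_separate_nonempty[OF False])
    then obtain c y where "x = c *\<^sub>R y" "0 \<le> c" "y \<in> convex hull (S - {0})"
      by (auto simp: conic_hull_explicit)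
    with \<open>x \<noteq> 0\<close> \<open>0 < b\<close> hb show "0 < h \<bullet> x"
      by (fastforce simp: less_le)
  qed
qed

lemma convex_cone_hull_image_scale:
  assumes "\<And>x. x \<in> S \<Longrightarrow> 0 < c x"
  shows "convex_cone hull ((\<lambda>x. c x *\<^sub>R x) ` S) = convex_cone hull S"
proof
  have "(\<lambda>x. c x *\<^sub>R x) ` S \<subseteq> convex_cone hull S"
  proof
    fix y assume "y \<in> (\<lambda>x. c x *\<^sub>R x) ` S"
    then obtain x where "x \<in> S" "y = c x *\<^sub>R x"
      by blast
    then show "y \<in> convex_cone hull S"
      using assms[of x] by (simp add: convex_cone_hull_mul hull_inc)
  qed
  then show "convex_cone hull ((\<lambda>x. c x *\<^sub>R x) ` S) \<subseteq> convex_cone hull S"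
    by (intro hull_minimal convex_cone_convex_cone_hull)
  have "S \<subseteq> convex_cone hull ((\<lambda>x. c x *\<^sub>R x) ` S)"
  proof
    fix x assume "x \<in> S"
    then have "0 < c x"
      using assms by blast
    have "c x *\<^sub>R x \<in> convex_cone hull ((\<lambda>x. c x *\<^sub>R x) ` S)"
      using \<open>x \<in> S\<close> by (intro hull_inc) blast
    then have "inverse (c x) *\<^sub>R (c x *\<^sub>R x) \<in> convex_cone hull ((\<lambda>x. c x *\<^sub>R x) ` S)"
      by (rule convex_cone_hull_mul) (use \<open>0 < c x\<close> in simp)
    then show "x \<in> convex_cone hull ((\<lambda>x. c x *\<^sub>R x) ` S)"
      using \<open>0 < c x\<close> by simp
  qed
  then show "convex_cone hull S \<subseteq> convex_cone hull ((\<lambda>x. c x *\<^sub>R x) ` S)"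
    by (intro hull_minimal convex_cone_convex_cone_hull)
qed

lemma convex_cone_hull_normalized:
  fixes S :: "'a::real_inner set"
  assumes "\<And>x. x \<in> convex_cone hull S \<Longrightarrow> x \<noteq> 0 \<Longrightarrow> 0 < h \<bullet> x"
  shows "convex_cone hull ((\<lambda>s. inverse (h \<bullet> s) *\<^sub>R s) ` (S - {0})) = convex_cone hull S"
  using convex_cone_hull_image_scale[of "S - {0}" "\<lambda>s. inverse (h \<bullet> s)"] assms[OF hull_inc]
  by (simp add: convex_cone_hull_Diff_0)

lemma convex_cone_hull_slice:
  fixes S :: "'a::real_inner set"
  assumes pos: "\<And>x. x \<in> convex_cone hull S \<Longrightarrow> x \<noteq> 0 \<Longrightarrow> 0 < h \<bullet> x"
  shows "convex_cone hull S \<inter> {x. h \<bullet> x = 1}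
    = convex hull ((\<lambda>s. inverse (h \<bullet> s) *\<^sub>R s) ` (S - {0}))"
    (is "?C \<inter> ?H = convex hull ?N")
proof
  have h_pos: "0 < h \<bullet> s" if "s \<in> S - {0}" for s
    using that pos[OF hull_inc] by blast
  have C_eq: "?C = convex_cone hull ?N"
    using convex_cone_hull_normalized[OF pos] by simp
  have "?N \<subseteq> ?H"
  proof
    fix y assume "y \<in> ?N"
    then obtain s where "s \<in> S - {0}" "y = inverse (h \<bullet> s) *\<^sub>R s"
      by blast
    then show "y \<in> ?H"
      using h_pos[of s] by simp
  qed
  then have N_H: "convex hull ?N \<subseteq> ?H"
    by (intro hull_minimal convex_hyperplane)
  moreover have "convex hull ?N \<subseteq> ?C"
    unfolding C_eq by (intro hull_minimal convex_convex_cone_hull hull_subset)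
  ultimately show "convex hull ?N \<subseteq> ?C \<inter> ?H"
    by blast
  show "?C \<inter> ?H \<subseteq> convex hull ?N"
  proof
    fix x assume x: "x \<in> ?C \<inter> ?H"
    then have "x \<in> convex_cone hull ?N" "x \<noteq> 0"
      using C_eq by auto
    then have "x \<in> conic hull (convex hull ?N)"
      unfolding convex_cone_hull_separate by blast
    then obtain c y where xy: "x = c *\<^sub>R y" and y: "y \<in> convex hull ?N"
      by (auto simp: conic_hull_explicit)
    have "h \<bullet> y = 1"
      using N_H y by blast
    then have "c = 1"
      using x xy by simp
    then show "x \<in> convex hull ?N"
      using xy y by simp
  qed
qed

lemma conic_hull_singleton: "conic hull {e} = {t *\<^sub>R e | t. 0 \<le> t}"
  by (auto simp: conic_hull_explicit)

lemma extreme_point_slice_segment: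
  fixes C :: "'a::real_inner set"
  assumes "convex_cone C" and pos: "\<And>x. x \<in> C \<Longrightarrow> x \<noteq> 0 \<Longrightarrow> 0 < h \<bullet> x"
    and e: "e extreme_point_of (C \<inter> {x. h \<bullet> x = 1})"
    and a: "a \<in> C" "a \<noteq> 0" and b: "b \<in> C" "b \<noteq> 0" and u: "0 < u" "u < 1"
    and t: "t *\<^sub>R e = (1 - u) *\<^sub>R a + u *\<^sub>R b"
  shows "a = (h \<bullet> a) *\<^sub>R e"
proof -
  have ha: "0 < h \<bullet> a" and hb: "0 < h \<bullet> b"
    using pos a b by auto
  define a' where "a' = inverse (h \<bullet> a) *\<^sub>R a"
  define b' where "b' = inverse (h \<bullet> b) *\<^sub>R b"
  have slice: "a' \<in> C \<inter> {x. h \<bullet> x = 1}" "b' \<in> C \<inter> {x. h \<bullet> x = 1}"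
    using ha hb a b \<open>convex_cone C\<close> by (auto simp: a'_def b'_def convex_cone_scaleR)
  have "h \<bullet> e = 1"
    using e by (auto simp: extreme_point_of_def)
  then have t_eq: "t = (1 - u) * (h \<bullet> a) + u * (h \<bullet> b)"
    using arg_cong[OF t, of "inner h"] by (simp add: inner_add_right)
  then have "0 < t"
    using ha hb u by (simp add: add_pos_pos)
  define \<mu> where "\<mu> = u * (h \<bullet> b) / t"
  have "0 < (1 - u) * (h \<bullet> a)" "0 < u * (h \<bullet> b)"
    using u ha hb by simp_all
  then have \<mu>: "0 < \<mu>" "\<mu> < 1" "1 - \<mu> = (1 - u) * (h \<bullet> a) / t"
    using \<open>0 < t\<close> t_eq by (auto simp: \<mu>_def field_simps)
  have "(1 - \<mu>) *\<^sub>R a' = ((1 - u) / t) *\<^sub>R a"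
    using ha by (simp add: \<mu>(3) a'_def)
  moreover have "\<mu> *\<^sub>R b' = (u / t) *\<^sub>R b"
    using hb by (simp add: \<mu>_def b'_def)
  moreover have "e = inverse t *\<^sub>R (t *\<^sub>R e)"
    using \<open>0 < t\<close> by simp
  ultimately have e_comb: "e = (1 - \<mu>) *\<^sub>R a' + \<mu> *\<^sub>R b'"
    unfolding t by (simp add: scaleR_add_right divide_inverse_commute)
  have "a' = b'"
  proof (rule ccontr)
    assume "a' \<noteq> b'"
    then have "e \<in> open_segment a' b'"
      using e_comb \<mu> by (auto simp: in_segment)
    then show False
      using e slice by (auto simp: extreme_point_of_def)
  qed
  then have "e = a'"
    using e_comb by (simp add: scaleR_add_left[symmetric])
  then show ?thesis
    using ha by (simp add: a'_def)
qed

lemma ray_face_of_convex_cone: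
  fixes C :: "'a::real_inner set"
  assumes "convex_cone C" and pos: "\<And>x. x \<in> C \<Longrightarrow> x \<noteq> 0 \<Longrightarrow> 0 < h \<bullet> x"
    and e: "e extreme_point_of (C \<inter> {x. h \<bullet> x = 1})"
  shows "conic hull {e} face_of C"
proof -
  have "e \<in> C"
    using e by (auto simp: extreme_point_of_def)
  have end_in_ray: "a \<in> conic hull {e}"
    if a: "a \<in> C" and b: "b \<in> C" and "x \<in> conic hull {e}" and "x \<in> open_segment a b" for a b x
  proof -
    obtain t where x: "x = t *\<^sub>R e" "0 \<le> t"
      using \<open>x \<in> conic hull {e}\<close> by (auto simp: conic_hull_singleton)
    obtain u where u: "0 < u" "u < 1" and xu: "x = (1 - u) *\<^sub>R a + u *\<^sub>R b"
      using \<open>x \<in> open_segment a b\<close> by (auto simp: in_segment)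
    consider "a = 0" | "b = 0" | "a \<noteq> 0" "b \<noteq> 0"
      by blast
    then show ?thesis
    proof cases
      case 1
      then show ?thesis
        by (simp add: conic_hull_singleton exI[of _ 0])
    next
      case 2
      then have eq: "(1 - u) *\<^sub>R a = t *\<^sub>R e"
        using x xu by simp
      have "a = inverse (1 - u) *\<^sub>R ((1 - u) *\<^sub>R a)"
        using u(2) by simp
      also have "\<dots> = (t / (1 - u)) *\<^sub>R e"
        unfolding eq by (simp add: divide_inverse_commute)
      finally show ?thesis
        using x(2) u(2) by (auto simp: conic_hull_singleton)
    next
      case 3
      then have "a \<noteq> 0" "b \<noteq> 0"
        by simp_all
      have "t *\<^sub>R e = (1 - u) *\<^sub>R a + u *\<^sub>R b"
        using x xu by simp
      with \<open>convex_cone C\<close> pos e a \<open>a \<noteq> 0\<close> b \<open>b \<noteq> 0\<close> u have "a = (h \<bullet> a) *\<^sub>R e"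
        by (rule extreme_point_slice_segment)
      moreover have "0 < h \<bullet> a"
        using pos a \<open>a \<noteq> 0\<close> by blast
      ultimately show ?thesis
        by (auto simp: conic_hull_singleton intro!: exI[of _ "h \<bullet> a"])
    qed
  qed
  show ?thesis
    unfolding face_of_def
  proof (intro conjI)
    show "conic hull {e} \<subseteq> C"
      using \<open>e \<in> C\<close> \<open>convex_cone C\<close> by (auto simp: conic_hull_singleton convex_cone_scaleR)
    show "convex (conic hull {e})"
      by (simp add: convex_conic_hull)
    show "\<forall>a\<in>C. \<forall>b\<in>C. \<forall>x\<in>conic hull {e}. x \<in> open_segment a b
      \<longrightarrow> a \<in> conic hull {e} \<and> b \<in> conic hull {e}"
      using end_in_ray by (metis open_segment_commute)
  qed
qed

lemma pointed_convex_cone_hull_extreme_rays: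
  fixes S :: "'a::euclidean_space set"
  assumes "finite S" and pointed: "convex_cone hull S \<inter> uminus ` (convex_cone hull S) = {0}"
  shows "convex_cone hull S
    = convex_cone hull {s \<in> S. s \<noteq> 0 \<and> conic hull {s} face_of convex_cone hull S}"
    (is "?C = convex_cone hull ?G")
proof
  show "convex_cone hull ?G \<subseteq> ?C"
    by (rule hull_mono) blast
  obtain h where pos: "\<And>x. x \<in> ?C \<Longrightarrow> x \<noteq> 0 \<Longrightarrow> 0 < h \<bullet> x"
    using pointed_convex_cone_hull_positive_functional[OF assms] by blast
  define N where "N = (\<lambda>s. inverse (h \<bullet> s) *\<^sub>R s) ` (S - {0})"
  have slice: "?C \<inter> {x. h \<bullet> x = 1} = convex hull N"
    unfolding N_def using pos by (rule convex_cone_hull_slice)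
  have "finite N"
    using \<open>finite S\<close> by (simp add: N_def)
  have extreme_in: "e \<in> convex_cone hull ?G" if e: "e extreme_point_of convex hull N" for e
  proof -
    have "e \<in> N"
      using extreme_points_of_convex_hull e by blast
    then obtain s where s: "s \<in> S - {0}" and es: "e = inverse (h \<bullet> s) *\<^sub>R s"
      unfolding N_def by blast
    have "0 < h \<bullet> s"
      using s by (intro pos hull_inc) auto
    have "conic hull {e} = conic hull {s}"
      using conic_hull_image_scale[of "{s}" "\<lambda>s. inverse (h \<bullet> s)"] \<open>0 < h \<bullet> s\<close>
      by (simp add: es)
    moreover have "conic hull {e} face_of ?C"
      using e by (intro ray_face_of_convex_cone[OF convex_cone_convex_cone_hull pos]) (simp_all add: slice)
    ultimately have "s \<in> ?G"
      using s by simp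
    then show ?thesis
      unfolding es using \<open>0 < h \<bullet> s\<close> by (simp add: convex_cone_hull_mul hull_inc)
  qed
  have "convex hull N = convex hull {e. e extreme_point_of convex hull N}"
    by (rule Krein_Milman_polytope[OF \<open>finite N\<close>])
  also have "\<dots> \<subseteq> convex_cone hull ?G"
    using extreme_in by (intro hull_minimal convex_convex_cone_hull) auto
  finally have "N \<subseteq> convex_cone hull ?G"
    using hull_subset[of N convex] by (rule order_trans[rotated])
  then have "convex_cone hull N \<subseteq> convex_cone hull ?G"
    by (intro hull_minimal convex_cone_convex_cone_hull)
  moreover have "convex_cone hull N = ?C"
    unfolding N_def by (rule convex_cone_hull_normalized[OF pos])
  ultimately show "?C \<subseteq> convex_cone hull ?G"
    by (simp only:)
qed

section \<open>Primitive generators of rays\<close>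

lemma aff_dim_conic_hull_singleton:
  fixes s :: "'a::euclidean_space"
  assumes "s \<noteq> 0"
  shows "aff_dim (conic hull {s}) = 1"
proof -
  have "span (conic hull {s}) = span {s}"
    unfolding span_eq
  proof
    show "conic hull {s} \<subseteq> span {s}"
      by (auto simp: conic_hull_singleton span_base span_mul)
    show "{s} \<subseteq> span (conic hull {s})"
      by (simp add: hull_inc span_base)
  qed
  then have "dim (conic hull {s}) = 1"
    using assms by (metis dim_singleton span_eq_dim)
  moreover have "0 \<in> affine hull (conic hull {s})"
    by (simp add: hull_inc)
  ultimately show ?thesis
    by (simp add: aff_dim_zero)
qed

lemma primitive_generator_exists:
  fixes s :: "real^'n"
  assumes "lattice_pt s" and "s \<noteq> 0"
  obtains p where "primitive_generator p (conic hull {s})"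
proof -
  obtain i where si: "s $ i \<noteq> 0"
    using assms(2) by (metis vec_eq_iff zero_index)
  define L where "L = {x \<in> conic hull {s}. lattice_pt x \<and> x \<noteq> 0}"
  define height where "height x = nat \<lfloor>\<bar>x $ i\<bar>\<rfloor>" for x :: "real^'n"
  have height: "real (height (t *\<^sub>R s)) = t * \<bar>s $ i\<bar>"
    if t: "0 \<le> t" "lattice_pt (t *\<^sub>R s)" for t
  proof -
    obtain z :: int where "(t *\<^sub>R s) $ i = of_int z"
      using t(2) unfolding lattice_pt_def by (meson Ints_cases)
    then have "real (height (t *\<^sub>R s)) = \<bar>(t *\<^sub>R s) $ i\<bar>"
      by (simp add: height_def)
    also have "\<dots> = t * \<bar>s $ i\<bar>"
      using t(1) by (simp add: abs_mult)
    finally show ?thesis .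
  qed
  have "s \<in> L"
    using assms by (auto simp: L_def hull_inc)
  then obtain p where "p \<in> L" and p_min: "\<And>y. y \<in> L \<Longrightarrow> height p \<le> height y"
    using ex_has_least_nat[of "\<lambda>x. x \<in> L" s height] by blast
  then obtain t0 where p: "p = t0 *\<^sub>R s" "0 < t0" and "lattice_pt p"
    by (fastforce simp: L_def conic_hull_singleton)
  \<comment> \<open>Reducing a lattice point t s of the ray modulo p leaves a lattice point of the ray of
    smaller height than p, which must therefore be 0.\<close>
  have "\<exists>m::nat. x = real m *\<^sub>R p" if x: "x \<in> conic hull {s}" "lattice_pt x" for x
  proof -
    obtain t where t: "x = t *\<^sub>R s" "0 \<le> t"
      using x(1) by (auto simp: conic_hull_singleton)
    define m where "m = nat \<lfloor>t / t0\<rfloor>"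
    define r where "r = t - real m * t0"
    have "real m = \<lfloor>t / t0\<rfloor>"
      using t(2) p(2) by (simp add: m_def)
    moreover have "of_int \<lfloor>t / t0\<rfloor> * t0 \<le> t"
      using pos_le_divide_eq[OF p(2)] of_int_floor_le by blast
    moreover have "t < (of_int \<lfloor>t / t0\<rfloor> + 1) * t0"
      using pos_divide_less_eq[OF p(2)] real_of_int_floor_add_one_gt by blast
    ultimately have r: "0 \<le> r" "r < t0"
      by (simp_all add: r_def algebra_simps)
    have "r *\<^sub>R s = x - real m *\<^sub>R p"
      by (simp add: r_def t(1) p(1) algebra_simps)
    then have "lattice_pt (r *\<^sub>R s)"
      using x(2) \<open>lattice_pt p\<close> by (simp add: lattice_pt_diff lattice_pt_scaleR)
    have "r = 0"
    proof (rule ccontr)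
      assume "r \<noteq> 0"
      then have "r *\<^sub>R s \<in> L"
        using r(1) si \<open>lattice_pt (r *\<^sub>R s)\<close> by (auto simp: L_def conic_hull_singleton)
      then have "real (height p) \<le> real (height (r *\<^sub>R s))"
        using p_min by simp
      then have "t0 * \<bar>s $ i\<bar> \<le> r * \<bar>s $ i\<bar>"
        using height r(1) p \<open>lattice_pt p\<close> \<open>lattice_pt (r *\<^sub>R s)\<close> by simp
      then show False
        using r(2) si by simp
    qed
    then show ?thesis
      using \<open>r *\<^sub>R s = x - real m *\<^sub>R p\<close> by auto
  qed
  then have "primitive_generator p (conic hull {s})"
    using \<open>p \<in> L\<close> by (simp add: primitive_generator_def L_def)
  then show thesis ..
qed

section \<open>Clearing the pairings colour by colour\<close>

lemma inner_zero_on_convex_cone_hull: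
  assumes "\<forall>p\<in>P. v \<bullet> p = 0" and "x \<in> convex_cone hull P"
  shows "v \<bullet> x = 0"
proof -
  have "convex_cone {x. v \<bullet> x = 0}"
    by (auto simp: convex_cone_iff inner_add_right)
  then have "convex_cone hull P \<subseteq> {x. v \<bullet> x = 0}"
    using assms(1) by (intro hull_minimal) auto
  then show ?thesis
    using assms(2) by blast
qed

text \<open>A positive combination of lattice vectors whose colours play the role of the parts E_j of
  a \<open>\<rat>\<close>-nef partition: the pairings with V are those of an amenable collection, and u is the
  linear form representing \<phi>_{k+1} on a cone containing the vectors.\<close>

locale coloured_combination =
  fixes k :: nat and V :: "nat \<Rightarrow> real^'n" and u :: "real^'n"
    and P :: "(real^'n) set" and a :: "real^'n \<Rightarrow> real" and colour :: "real^'n \<Rightarrow> nat"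
  assumes finite_P: "finite P" and P_nonempty: "P \<noteq> {}"
    and a_pos: "\<And>p. p \<in> P \<Longrightarrow> 0 < a p"
    and kernel: "\<And>i. i \<in> {1..k} \<Longrightarrow> V i \<bullet> (\<Sum>p\<in>P. a p *\<^sub>R p) = 0"
    and lattice_P: "\<And>p. p \<in> P \<Longrightarrow> lattice_pt p"
    and lattice_V: "\<And>i. i \<in> {1..k} \<Longrightarrow> lattice_pt (V i)"
    and colour: "\<And>p. p \<in> P \<Longrightarrow> colour p \<in> {1..k+1}"
    and pairing_same: "\<And>p i. p \<in> P \<Longrightarrow> i \<in> {1..k} \<Longrightarrow> colour p = i \<Longrightarrow> V i \<bullet> p = -1"
    and pairing_later: "\<And>p i. p \<in> P \<Longrightarrow> i \<in> {1..k} \<Longrightarrow> i < colour p \<Longrightarrow> 0 \<le> V i \<bullet> p"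
    and pairing_earlier: "\<And>p i. p \<in> P \<Longrightarrow> i \<in> {1..k} \<Longrightarrow> colour p < i \<Longrightarrow> V i \<bullet> p = 0"
    and u_value: "\<And>p. p \<in> P \<Longrightarrow> u \<bullet> p = (if colour p = k + 1 then 1 else 0)"
begin

lemma weighted_pairings_sum_zero:
  "i \<in> {1..k} \<Longrightarrow> (\<Sum>p\<in>P. a p * (V i \<bullet> p)) = 0"
  using kernel by (simp add: inner_sum_right)

lemma top_colour_occurs: "\<exists>p\<in>P. colour p = k + 1"
proof (rule ccontr)
  assume no_top: "\<not> ?thesis"
  define m where "m = Max (colour ` P)"
  have "m \<in> colour ` P"
    using finite_P P_nonempty by (simp add: m_def)
  then obtain q where q: "q \<in> P" "colour q = m"
    by blast
  have m_max: "colour p \<le> m" if "p \<in> P" for p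
    using finite_P that by (simp add: m_def)
  have m: "m \<in> {1..k}"
    using colour[OF q(1)] q no_top by auto
  have "a p * (V m \<bullet> p) \<le> 0" if "p \<in> P" for p
  proof -
    have "V m \<bullet> p \<le> 0"
      using m_max[OF that] pairing_same[OF that m] pairing_earlier[OF that m]
      by (cases "colour p = m") auto
    then show ?thesis
      using a_pos[OF that] by (simp add: mult_nonneg_nonpos)
  qed
  moreover have "a q * (V m \<bullet> q) < 0"
    using a_pos[OF q(1)] pairing_same[OF q(1) m q(2)] by simp
  ultimately have "(\<Sum>p\<in>P. a p * (V m \<bullet> p)) < (\<Sum>p\<in>P. 0)"
    using finite_P q(1) by (intro sum_strict_mono_ex1) auto
  then show False
    using weighted_pairings_sum_zero[OF m] by simp
qed

lemma missing_colour_orthogonal: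
  assumes i: "i \<in> {1..k}" and missing: "\<forall>p\<in>P. colour p \<noteq> i"
  shows "\<forall>p\<in>P. V i \<bullet> p = 0"
proof -
  have nonneg: "0 \<le> a p * (V i \<bullet> p)" if "p \<in> P" for p
  proof -
    have "0 \<le> V i \<bullet> p"
      using missing that pairing_later[OF that i] pairing_earlier[OF that i]
      by (cases "i < colour p") auto
    then show ?thesis
      using a_pos[OF that] by simp
  qed
  then have "\<forall>p\<in>P. a p * (V i \<bullet> p) = 0"
    using weighted_pairings_sum_zero[OF i] by (simp add: sum_nonneg_eq_0_iff[OF finite_P])
  then show ?thesis
    using a_pos by (metis less_irrefl mult_eq_0_iff)
qed

lemma clear_pairing:
  assumes i: "i \<in> {1..k}" and r: "r \<in> P" "colour r = i"
    and w: "w \<in> convex_cone hull P" "lattice_pt w" "u \<bullet> w = 1" "0 \<le> V i \<bullet> w"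
  defines "w' \<equiv> w + (V i \<bullet> w) *\<^sub>R r"
  shows "w' \<in> convex_cone hull P" and "lattice_pt w'" and "u \<bullet> w' = 1" and "V i \<bullet> w' = 0"
    and "\<And>j. j \<in> {1..k} \<Longrightarrow> i < j \<Longrightarrow> V j \<bullet> w' = V j \<bullet> w"
    and "\<And>j. j \<in> {1..k} \<Longrightarrow> j < i \<Longrightarrow> V j \<bullet> w \<le> V j \<bullet> w'"
proof -
  have "V i \<bullet> w \<in> \<int>"
    using lattice_V[OF i] w(2) by (rule lattice_pt_inner_Ints)
  show "w' \<in> convex_cone hull P"
    unfolding w'_def using r(1) w(4)
    by (intro convex_cone_hull_add[OF w(1)] convex_cone_hull_mul hull_inc)
  show "lattice_pt w'"
    unfolding w'_def using w(2) lattice_P[OF r(1)] \<open>V i \<bullet> w \<in> \<int>\<close>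
    by (intro lattice_pt_add lattice_pt_scaleR)
  show "u \<bullet> w' = 1"
    using w(3) u_value[OF r(1)] r(2) i by (simp add: w'_def inner_add_right)
  show "V i \<bullet> w' = 0"
    using pairing_same[OF r(1) i r(2)] by (simp add: w'_def inner_add_right)
  show "V j \<bullet> w' = V j \<bullet> w" if "j \<in> {1..k}" "i < j" for j
    using pairing_earlier[OF r(1) that(1)] r(2) that(2) by (simp add: w'_def inner_add_right)
  show "V j \<bullet> w \<le> V j \<bullet> w'" if "j \<in> {1..k}" "j < i" for j
    using pairing_later[OF r(1) that(1)] r(2) that(2) w(4) by (simp add: w'_def inner_add_right)
qed

text \<open>Starting from a vector of top colour, the pairings with V k, ..., V 1 are cleared one at a
  time by adding a nonnegative integer multiple of a vector of that colour.\<close>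

lemma descent:
  assumes "m \<le> k"
  shows "\<exists>w\<in>convex_cone hull P. lattice_pt w \<and> u \<bullet> w = 1 \<and>
    (\<forall>i\<in>{1..k}. m < i \<longrightarrow> V i \<bullet> w = 0) \<and> (\<forall>i\<in>{1..k}. i \<le> m \<longrightarrow> 0 \<le> V i \<bullet> w)"
  using assms
proof (induction m rule: inc_induct)
  case base
  obtain p where p: "p \<in> P" "colour p = k + 1"
    using top_colour_occurs by blast
  have "\<forall>i\<in>{1..k}. 0 \<le> V i \<bullet> p"
    using pairing_later[OF p(1)] p(2) by simp
  then show ?case
    using p lattice_P[OF p(1)] u_value[OF p(1)] hull_inc[of p P] by auto
next
  case (step m)
  have i: "Suc m \<in> {1..k}"
    using step.hyps by simp
  obtain w where w: "w \<in> convex_cone hull P" "lattice_pt w" "u \<bullet> w = 1"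
    and w_later: "\<forall>j\<in>{1..k}. Suc m < j \<longrightarrow> V j \<bullet> w = 0"
    and w_earlier: "\<forall>j\<in>{1..k}. j \<le> Suc m \<longrightarrow> 0 \<le> V j \<bullet> w"
    using step.IH by blast
  show ?case
  proof (cases "\<exists>r\<in>P. colour r = Suc m")
    case True
    then obtain r where r: "r \<in> P" "colour r = Suc m"
      by blast
    define w' where "w' = w + (V (Suc m) \<bullet> w) *\<^sub>R r"
    note clear = clear_pairing[OF i r w w_earlier[rule_format, OF i order.refl], folded w'_def]
    have "V j \<bullet> w' = 0" if "j \<in> {1..k}" "m < j" for j
      using clear(4) clear(5)[of j] w_later that by (cases "j = Suc m") auto
    moreover have "0 \<le> V j \<bullet> w'" if "j \<in> {1..k}" "j \<le> m" for j
    proof -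
      have "V j \<bullet> w \<le> V j \<bullet> w'"
        using clear(6) that by simp
      moreover have "0 \<le> V j \<bullet> w"
        using w_earlier that by simp
      ultimately show ?thesis
        by linarith
    qed
    ultimately show ?thesis
      using clear(1-3) by blast
  next
    case False
    then have "V (Suc m) \<bullet> w = 0"
      using missing_colour_orthogonal[OF i] w(1) inner_zero_on_convex_cone_hull by blast
    then have "\<forall>j\<in>{1..k}. m < j \<longrightarrow> V j \<bullet> w = 0"
      using w_later by (metis Suc_lessI)
    then show ?thesis
      using w w_earlier by auto
  qed
qed

lemma lattice_point_in_kernel:
  "\<exists>w\<in>convex_cone hull P. lattice_pt w \<and> (\<forall>i\<in>{1..k}. V i \<bullet> w = 0) \<and> u \<bullet> w = 1"
  using descent[of 0] by auto

end

section \<open>Fans, \<open>\<rat>\<close>-nef partitions and amenable collections\<close>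

lemma fan_face_mem: "is_fan \<Sigma> \<Longrightarrow> \<sigma> \<in> \<Sigma> \<Longrightarrow> F face_of \<sigma> \<Longrightarrow> F \<noteq> {} \<Longrightarrow> F \<in> \<Sigma>"
  unfolding is_fan_def by blast

lemma fan_cone_pointed_rational:
  "is_fan \<Sigma> \<Longrightarrow> \<sigma> \<in> \<Sigma> \<Longrightarrow> rat_poly_cone \<sigma> \<and> strictly_convex_cone \<sigma>"
  unfolding is_fan_def by blast

lemma face_ray_primitive_generator:
  assumes "is_fan \<Sigma>" and "C \<in> \<Sigma>" and "lattice_pt s" and "s \<noteq> 0"
    and face: "conic hull {s} face_of C"
  obtains p where "p \<in> rays \<Sigma>" "p \<in> C" "s \<in> conic hull {p}"
proof -
  obtain p where p: "primitive_generator p (conic hull {s})"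
    using primitive_generator_exists[OF assms(3,4)] by blast
  have "conic hull {s} \<in> \<Sigma>"
    using fan_face_mem[OF assms(1,2) face] by (simp add: conic_hull_eq_empty)
  then have "p \<in> rays \<Sigma>"
    using p aff_dim_conic_hull_singleton[OF assms(4)] unfolding rays_def by blast
  moreover have "p \<in> C"
    using p face_of_imp_subset[OF face] unfolding primitive_generator_def by blast
  moreover obtain t where t: "p = t *\<^sub>R s" "0 \<le> t"
    using p unfolding primitive_generator_def conic_hull_singleton by blast
  then have "s = inverse t *\<^sub>R p" "0 \<le> inverse t"
    using p unfolding primitive_generator_def by auto
  then have "s \<in> conic hull {p}"
    unfolding conic_hull_singleton by blast
  ultimately show thesis
    using that by blast
qed

lemma fan_cone_generated_by_rays:
  assumes fan: "is_fan \<Sigma>" and "C \<in> \<Sigma>"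
  obtains P where "finite P" "P \<subseteq> rays \<Sigma>" "C = convex_cone hull P"
proof -
  obtain S where S: "finite S" "\<forall>x\<in>S. lattice_pt x" and C: "C = convex_cone hull S"
    using fan_cone_pointed_rational[OF assms] unfolding rat_poly_cone_iff by blast
  have pointed: "convex_cone hull S \<inter> uminus ` (convex_cone hull S) = {0}"
    using fan_cone_pointed_rational[OF assms] unfolding C strictly_convex_cone_def by blast
  define G where "G = {s \<in> S. s \<noteq> 0 \<and> conic hull {s} face_of C}"
  have C_G: "C = convex_cone hull G"
    unfolding G_def C by (rule pointed_convex_cone_hull_extreme_rays[OF S(1) pointed])
  have "\<exists>p. p \<in> rays \<Sigma> \<and> p \<in> C \<and> s \<in> conic hull {p}" if "s \<in> G" for s
  proof -
    have "lattice_pt s" "s \<noteq> 0" "conic hull {s} face_of C"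
      using that S(2) by (auto simp: G_def)
    then show ?thesis
      using face_ray_primitive_generator[OF fan \<open>C \<in> \<Sigma>\<close>] by metis
  qed
  then obtain gen where gen: "\<And>s. s \<in> G \<Longrightarrow> gen s \<in> rays \<Sigma> \<and> gen s \<in> C \<and> s \<in> conic hull {gen s}"
    by metis
  have "G \<subseteq> convex_cone hull (gen ` G)"
  proof
    fix s assume "s \<in> G"
    then obtain t where "s = t *\<^sub>R gen s" "0 \<le> t"
      using gen unfolding conic_hull_singleton by blast
    moreover have "t *\<^sub>R gen s \<in> convex_cone hull (gen ` G)"
      using \<open>s \<in> G\<close> \<open>0 \<le> t\<close> by (intro convex_cone_hull_mul hull_inc) auto
    ultimately show "s \<in> convex_cone hull (gen ` G)"
      by simp
  qed
  then have "C \<subseteq> convex_cone hull (gen ` G)"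
    unfolding C_G by (intro hull_minimal convex_cone_convex_cone_hull)
  moreover have "convex_cone hull (gen ` G) \<subseteq> C"
    unfolding C using gen[unfolded C] by (intro hull_minimal convex_cone_convex_cone_hull) auto
  ultimately have "C = convex_cone hull (gen ` G)"
    by (rule antisym)
  moreover have "finite (gen ` G)"
    using S(1) by (simp add: G_def)
  moreover have "gen ` G \<subseteq> rays \<Sigma>"
    using gen by auto
  ultimately show thesis
    using that by blast
qed

lemma aff_dim_pos_imp_nonzero:
  fixes A :: "'a::euclidean_space set"
  assumes "0 < aff_dim A"
  obtains x where "x \<in> A" "x \<noteq> 0"
proof -
  have "\<not> A \<subseteq> {0}"
    using aff_dim_subset[of A "{0}"] assms by auto
  then show thesis
    using that by blast
qed

lemma rays_lattice_pt: "p \<in> rays \<Sigma> \<Longrightarrow> lattice_pt p"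
  unfolding rays_def primitive_generator_def by blast

lemma cone_subset_maximal_cone:
  assumes "finite \<Sigma>" and "C \<in> \<Sigma>"
  obtains \<sigma> where "\<sigma> \<in> maximal_cones \<Sigma>" "C \<subseteq> \<sigma>"
proof -
  obtain \<sigma> where \<sigma>: "\<sigma> \<in> \<Sigma>" "C \<subseteq> \<sigma>" "\<forall>\<tau>\<in>\<Sigma>. \<sigma> \<subseteq> \<tau> \<longrightarrow> \<sigma> = \<tau>"
    using finite_has_maximal2[OF assms] by blast
  then have "\<sigma> \<in> maximal_cones \<Sigma>"
    unfolding maximal_cones_def by auto
  then show thesis
    using that \<sigma>(2) by blast
qed

lemma Qnef_partition_rays:
  "Qnef_partition \<Sigma> k E \<phi> \<Longrightarrow> (\<Union>j\<in>{1..k+1}. E j) = rays \<Sigma>"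
  by (simp add: Qnef_partition_def)

lemma Qnef_partition_values:
  "Qnef_partition \<Sigma> k E \<phi> \<Longrightarrow> i \<in> {1..k+1} \<Longrightarrow> j \<in> {1..k+1} \<Longrightarrow> \<rho> \<in> E j
    \<Longrightarrow> \<phi> i \<rho> = (if i = j then 1 else 0)"
  unfolding Qnef_partition_def by (elim conjE) (simp only: Ball_def)

lemma Qnef_partition_linear_on_cone:
  assumes Qnef: "Qnef_partition \<Sigma> k E \<phi>" and "is_fan \<Sigma>" and "C \<in> \<Sigma>" and i: "i \<in> {1..k+1}"
  obtains u where "\<And>v. v \<in> C \<Longrightarrow> \<phi> i v = u \<bullet> v"
proof -
  have "finite \<Sigma>"
    using \<open>is_fan \<Sigma>\<close> by (simp add: is_fan_def)
  then obtain \<sigma> where \<sigma>: "\<sigma> \<in> maximal_cones \<Sigma>" "C \<subseteq> \<sigma>"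
    using cone_subset_maximal_cone \<open>C \<in> \<Sigma>\<close> by blast
  have "\<exists>U. \<forall>\<sigma>\<in>maximal_cones \<Sigma>. \<forall>v\<in>\<sigma>. \<phi> i v = U \<sigma> \<bullet> v"
  proof -
    from Qnef have "\<forall>i\<in>{1..k+1}. \<exists>U :: (real^'a) set \<Rightarrow> real^'a.
        (\<forall>\<sigma>\<in>maximal_cones \<Sigma>. rational_pt (U \<sigma>)) \<and>
        (\<forall>v. \<phi> i v = Max ((\<lambda>\<sigma>. U \<sigma> \<bullet> v) ` maximal_cones \<Sigma>)) \<and>
        (\<forall>\<sigma>\<in>maximal_cones \<Sigma>. \<forall>v\<in>\<sigma>. \<phi> i v = U \<sigma> \<bullet> v)"
      unfolding Qnef_partition_def by (elim conjE)
    with i show ?thesis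
      by blast
  qed
  then show thesis
    using that \<sigma> by blast
qed

lemma amenable_pairings:
  assumes "amenable k E V" and "i \<in> {1..k}"
  shows "lattice_pt (V i)" and "\<rho> \<in> E i \<Longrightarrow> V i \<bullet> \<rho> = -1"
    and "i < j \<Longrightarrow> j \<le> k + 1 \<Longrightarrow> \<rho> \<in> E j \<Longrightarrow> 0 \<le> V i \<bullet> \<rho>"
    and "1 \<le> j \<Longrightarrow> j < i \<Longrightarrow> \<rho> \<in> E j \<Longrightarrow> V i \<bullet> \<rho> = 0"
  using assms unfolding amenable_def by auto

lemma coloured_combination_of_rays:
  assumes Qnef: "Qnef_partition \<Sigma> k E \<phi>" and amenable: "amenable k E V"
    and "finite Q" and "Q \<noteq> {}" and "Q \<subseteq> rays \<Sigma>" and "\<forall>p\<in>Q. 0 < a p"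
    and kernel: "(\<Sum>p\<in>Q. a p *\<^sub>R p) \<in> M_V k V"
    and u: "\<And>p. p \<in> Q \<Longrightarrow> \<phi> (k + 1) p = u \<bullet> p"
  shows "coloured_combination k V u Q a (\<lambda>p. SOME j. j \<in> {1..k+1} \<and> p \<in> E j)"
    (is "coloured_combination _ _ _ _ _ ?colour")
proof -
  have colour: "?colour p \<in> {1..k+1}" "p \<in> E (?colour p)" if "p \<in> Q" for p
  proof -
    have "\<exists>j. j \<in> {1..k+1} \<and> p \<in> E j"
      using Qnef_partition_rays[OF Qnef] \<open>Q \<subseteq> rays \<Sigma>\<close> that by blast
    then show "?colour p \<in> {1..k+1}" "p \<in> E (?colour p)"
      using someI_ex[of "\<lambda>j. j \<in> {1..k+1} \<and> p \<in> E j"] by blast+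
  qed
  show ?thesis
  proof
    show "finite Q" "Q \<noteq> {}" by fact+
    show "\<And>p. p \<in> Q \<Longrightarrow> 0 < a p"
      using assms(6) by blast
    show "\<And>i. i \<in> {1..k} \<Longrightarrow> V i \<bullet> (\<Sum>p\<in>Q. a p *\<^sub>R p) = 0"
      using kernel unfolding M_V_def by blast
    show "\<And>p. p \<in> Q \<Longrightarrow> lattice_pt p"
      using \<open>Q \<subseteq> rays \<Sigma>\<close> rays_lattice_pt by blast
    show "\<And>i. i \<in> {1..k} \<Longrightarrow> lattice_pt (V i)"
      using amenable_pairings(1)[OF amenable] .
    show "\<And>p. p \<in> Q \<Longrightarrow> ?colour p \<in> {1..k+1}"
      using colour(1) .
    show "V i \<bullet> p = -1" if "p \<in> Q" "i \<in> {1..k}" "?colour p = i" for p i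
      using amenable_pairings(2)[OF amenable that(2)] colour(2)[OF that(1)] that(3) by simp
    show "0 \<le> V i \<bullet> p" if "p \<in> Q" "i \<in> {1..k}" "i < ?colour p" for p i
      using amenable_pairings(3)[OF amenable that(2) that(3)] colour[OF that(1)] by simp
    show "V i \<bullet> p = 0" if "p \<in> Q" "i \<in> {1..k}" "?colour p < i" for p i
      using amenable_pairings(4)[OF amenable that(2) _ that(3)] colour[OF that(1)] by simp
    show "u \<bullet> p = (if ?colour p = k + 1 then 1 else 0)" if "p \<in> Q" for p
      using Qnef_partition_values[OF Qnef _ colour[OF that]] u[OF that] by auto
  qed
qed

lemma fan_cone_point_ray_combination:
  assumes "is_fan \<Sigma>" and "C \<in> \<Sigma>" and "\<rho> \<in> C" and "\<rho> \<noteq> 0"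
  obtains Q a where "finite Q" "Q \<noteq> {}" "Q \<subseteq> rays \<Sigma>" "convex_cone hull Q \<subseteq> C"
    "\<forall>p\<in>Q. 0 < a p" "\<rho> = (\<Sum>p\<in>Q. a p *\<^sub>R p)"
proof -
  obtain P where P: "finite P" "P \<subseteq> rays \<Sigma>" "C = convex_cone hull P"
    using fan_cone_generated_by_rays[OF assms(1,2)] by blast
  obtain Q a where Q: "Q \<subseteq> P" "\<forall>p\<in>Q. 0 < a p" "\<rho> = (\<Sum>p\<in>Q. a p *\<^sub>R p)"
    using convex_cone_hull_finite_positive[OF P(1)] assms(3) P(3) by blast
  show thesis
  proof (rule that)
    show "finite Q"
      using Q(1) P(1) by (rule finite_subset)
    show "Q \<noteq> {}"
      using Q(3) assms(4) by auto
    show "Q \<subseteq> rays \<Sigma>"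
      using Q(1) P(2) by (rule order_trans)
    show "convex_cone hull Q \<subseteq> C"
      unfolding P(3) using Q(1) by (rule hull_mono)
  qed (use Q in auto)
qed

theorem proposition2p12:
  fixes \<Sigma> :: "(real^'n) set set" and k :: nat
    and E :: "nat \<Rightarrow> (real^'n) set" and \<phi> :: "nat \<Rightarrow> real^'n \<Rightarrow> real"
    and V :: "nat \<Rightarrow> real^'n" and C :: "(real^'n) set"
  assumes "complete_fan \<Sigma>"
    and "Qnef_partition \<Sigma> k E \<phi>"
    and "amenable k E V"
    and "C \<in> \<Sigma>"
    and "aff_dim (C \<inter> M_V k V) = 1"
    and "\<forall>\<sigma>\<in>\<Sigma>. \<sigma> \<subseteq> C \<and> aff_dim (\<sigma> \<inter> M_V k V) = 1 \<longrightarrow> \<sigma> = C"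
  shows "\<exists>\<rho>\<in>C \<inter> M_V k V. lattice_pt \<rho> \<and> \<phi> (k + 1) \<rho> = 1"
proof -
  have fan: "is_fan \<Sigma>"
    using assms(1) by (simp add: complete_fan_def)
  obtain \<rho> where \<rho>: "\<rho> \<in> C" "\<rho> \<in> M_V k V" "\<rho> \<noteq> 0"
    using aff_dim_pos_imp_nonzero assms(5) by (metis IntE zero_less_one)
  obtain Q a where Q: "finite Q" "Q \<noteq> {}" "Q \<subseteq> rays \<Sigma>" "convex_cone hull Q \<subseteq> C"
      "\<forall>p\<in>Q. 0 < a p" "\<rho> = (\<Sum>p\<in>Q. a p *\<^sub>R p)"
    using fan_cone_point_ray_combination[OF fan assms(4) \<rho>(1,3)] by blast
  obtain u where u: "\<And>v. v \<in> C \<Longrightarrow> \<phi> (k + 1) v = u \<bullet> v"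
    using Qnef_partition_linear_on_cone[OF assms(2) fan assms(4), of "k + 1"] by auto
  have "Q \<subseteq> C"
    using hull_subset Q(4) by (rule order_trans)
  then have "\<And>p. p \<in> Q \<Longrightarrow> \<phi> (k + 1) p = u \<bullet> p"
    using u by blast
  with \<rho>(2) interpret coloured_combination k V u Q a "\<lambda>p. SOME j. j \<in> {1..k+1} \<and> p \<in> E j"
    unfolding Q(6) by (rule coloured_combination_of_rays[OF assms(2,3) Q(1-3,5)])
  obtain w where w: "w \<in> convex_cone hull Q" "lattice_pt w" "\<forall>i\<in>{1..k}. V i \<bullet> w = 0" "u \<bullet> w = 1"
    using lattice_point_in_kernel by blast
  have "w \<in> C"
    using Q(4) w(1) by (rule subsetD)
  then show ?thesis
    using w u[OF \<open>w \<in> C\<close>] by (auto simp: M_V_def)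
qed

end
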